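(* Let $(V,\sigma)$ be a complex symplectic vector space of dimension $2n+2$, let $Z\subset\mathbb{P}V$ be a Legendrian variety and let $z\in Z$ be a nonsingular point. Then (a) $\mathrm{Im}(\mathrm{II}_{Z,z})\subset D_z/T_zZ$; (b) $\mathrm{Im}(\mathrm{II}_{Z,z})=D_z/T_zZ$ if and only if $\mathrm{II}_{Z,z}$ is nondegenerate, i.e. its null space $\mathrm{Null}(\mathrm{II}_{Z,z})=\{v\in T_zZ:\mathrm{II}_{Z,z}(v,w)=0\text{ for all }w\in T_zZ\}$ is zero. Moreover, if there is a nonsingular point $z\in Z$ satisfying the equivalent conditions of (b), then (for this $z$): (c) the third fundamental form $\mathrm{III}_{Z,z}$ is, up to a nonzero scalar multiple, given by a single cubic form $f^z\in\mathrm{Sym}^3T_z^*Z$, which satisfies $f^z(\partial/\partial y^i,\partial/\partial y^j,\partial/\partial y^k)=\frac{\partial^3E(0)}{\partial y^i\partial y^j\partial y^k}$ for all $1\le i,j,k\le n$ in adapted coordinates as described in the context; (d) the second fundamental form $\mathrm{II}_{Z,z}$ is, up to a nonzero scalar multiple, given by the $n$-dimensional system of quadratic forms $\{f^z(v,\cdot,\cdot)\in\mathrm{Sym}^2T_z^*Z: v\in T_zZ\}$; that is, the span of the quadratic forms $\lambda\circ\mathrm{II}_{Z,z}$, $\lambda\in(D_z/T_zZ)^*$, equals this system; (e) $Z$ is linearly nondegenerate in $\mathbb{P}V$, i.e. not contained in any hyperplane.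
   Context: $D_z=\mathrm{Hom}(\widehat z,\widehat z^{\perp_\sigma}/\widehat z)\subset T_z\mathbb{P}V=\mathrm{Hom}(\widehat z,V/\widehat z)$ is the contact hyperplane at $z$, the kernel of the contact form $\theta$. $Z\subset\mathbb{P}V$ of dimension $n$ is Legendrian if $T_zZ\subset D_z$ at nonsingular points. $\mathrm{II}_{Z,z}\in\mathrm{Hom}(\mathrm{Sym}^2T_zZ,T_z\mathbb{P}V/T_zZ)$ and $\mathrm{III}_{Z,z}\in\mathrm{Hom}(\mathrm{Sym}^3T_zZ,T_z\mathbb{P}V/\mathrm{Im}\,\mathrm{II}_{Z,z})$ are the projective second and third fundamental forms (2-jets, resp. 3-jets, at $z$ of restrictions to $Z$ of linear forms vanishing to second, resp. third, order at $z$). Adapted coordinates: inhomogeneous coordinates $(x^1,\dots,x^{2n+1})$ on an affine open set of $\mathbb{P}V$ with $z$ the origin, $(x^{n+1}=\dots=x^{2n+1}=0)$ tangent to $Z$ at $z$, and $\theta$ proportional to $\sum_{k=1}^n(x^{n+k}dx^k-x^kdx^{n+k})-dx^{2n+1}$; near $z$, $Z$ is given by $x^k=y^k$, $x^{n+k}=F^k(y)$ ($1\le k\le n$), $x^{2n+1}=E(y)$, with $(y^1,\dots,y^n)$ local coordinates on $Z$ and $F^k,E$ holomorphic vanishing at $y=0$. *)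

theory Defs
  imports "HOL-Analysis.Analysis"
begin

text \<open>Points of the affine chart of P V are triples (a,b,c) with a = (x^1..x^n),
  b = (x^(n+1)..x^(2n)), c = x^(2n+1); the point z is the origin.
  Local coordinates on Z are y in C^n, and Z is the graph y |-> (y, F y, E y).\<close>

definition cdot :: "complex^'n::finite \<Rightarrow> complex^'n \<Rightarrow> complex" where
  "cdot a y = (\<Sum>k\<in>UNIV. a$k * y$k)"

definition cholo_on :: "(complex^'n::finite \<Rightarrow> complex) \<Rightarrow> (complex^'n) set \<Rightarrow> bool" where
  "cholo_on g U \<longleftrightarrow> open U \<and>
     (\<forall>y\<in>U. \<exists>D. (g has_derivative D) (at y) \<and> (\<forall>c v. D (c *s v) = c * D v))"

definition pd :: "'n::finite \<Rightarrow> (complex^'n \<Rightarrow> complex) \<Rightarrow> complex^'n \<Rightarrow> complex" where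
  "pd i g y = deriv (\<lambda>t. g (y + axis i t)) 0"

fun ipd :: "'n::finite list \<Rightarrow> (complex^'n \<Rightarrow> complex) \<Rightarrow> complex^'n \<Rightarrow> complex" where
  "ipd [] g = g"
| "ipd (i # is) g = pd i (ipd is g)"

text \<open>The contact form theta = sum_k (x^(n+k) dx^k - x^k dx^(n+k)) - dx^(2n+1)
  at the point x applied to the tangent vector xi.\<close>
definition contact_form ::
  "((complex^'n::finite) \<times> (complex^'n) \<times> complex) \<Rightarrow> ((complex^'n) \<times> (complex^'n) \<times> complex) \<Rightarrow> complex" where
  "contact_form x xi = (case x of (a, b, c) \<Rightarrow> case xi of (xa, xb, xc) \<Rightarrow>
       cdot b xa - cdot a xb - xc)"

definition dparam ::
  "(complex^'n::finite \<Rightarrow> complex^'n) \<Rightarrow> (complex^'n \<Rightarrow> complex) \<Rightarrow> complex^'n \<Rightarrow> complex^'n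
     \<Rightarrow> (complex^'n) \<times> (complex^'n) \<times> complex" where
  "dparam F E y v = (v, (\<chi> k. \<Sum>j\<in>UNIV. v$j * pd j (\<lambda>x. F x $ k) y),
                        \<Sum>j\<in>UNIV. v$j * pd j E y)"

definition adapted_legendrian ::
  "(complex^'n::finite \<Rightarrow> complex^'n) \<Rightarrow> (complex^'n \<Rightarrow> complex) \<Rightarrow> (complex^'n) set \<Rightarrow> bool" where
  "adapted_legendrian F E U \<longleftrightarrow>
     open U \<and> 0 \<in> U \<and> (\<forall>k. cholo_on (\<lambda>y. F y $ k) U) \<and> cholo_on E U \<and>
     F 0 = 0 \<and> E 0 = 0 \<and>
     (\<forall>j k. pd j (\<lambda>y. F y $ k) 0 = 0) \<and> (\<forall>j. pd j E 0 = 0) \<and>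
     (\<forall>y\<in>U. \<forall>v. contact_form (y, F y, E y) (dparam F E y v) = 0)"

text \<open>Normal space N = T_z PV / T_z Z, identified with C^n x C (coordinates x^(n+1)..x^(2n+1)),
  via the quotient map (a,b,c) |-> (b,c) (T_z Z = {(v,0,0)}).\<close>
definition quotT :: "(complex^'n::finite) \<times> (complex^'n) \<times> complex \<Rightarrow> (complex^'n) \<times> complex" where
  "quotT xi = (fst (snd xi), snd (snd xi))"

definition Dz :: "((complex^'n::finite) \<times> (complex^'n) \<times> complex) set" where
  "Dz = {xi. contact_form (0, 0, 0) xi = 0}"

definition DmodT :: "((complex^'n::finite) \<times> complex) set" where
  "DmodT = quotT ` Dz"

definition II ::
  "(complex^'n::finite \<Rightarrow> complex^'n) \<Rightarrow> (complex^'n \<Rightarrow> complex) \<Rightarrow> complex^'n \<Rightarrow> complex^'n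
     \<Rightarrow> (complex^'n) \<times> complex" where
  "II F E v w =
     ((\<chi> k. \<Sum>i\<in>UNIV. \<Sum>j\<in>UNIV. v$i * w$j * ipd [i, j] (\<lambda>y. F y $ k) 0),
      \<Sum>i\<in>UNIV. \<Sum>j\<in>UNIV. v$i * w$j * ipd [i, j] E 0)"

text \<open>Image of II (as a linear map on Sym^2 T_z Z).\<close>
definition ImII ::
  "(complex^'n::finite \<Rightarrow> complex^'n) \<Rightarrow> (complex^'n \<Rightarrow> complex) \<Rightarrow> ((complex^'n) \<times> complex) set" where
  "ImII F E = {(\<Sum>l<m. II F E (v l) (w l)) | (m::nat) v w. True}"

text \<open>Representative in N of III_{Z,z}(u,v,w); III is its class modulo Im II.\<close>
definition III ::
  "(complex^'n::finite \<Rightarrow> complex^'n) \<Rightarrow> (complex^'n \<Rightarrow> complex) \<Rightarrow> complex^'n \<Rightarrow> complex^'n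
     \<Rightarrow> complex^'n \<Rightarrow> (complex^'n) \<times> complex" where
  "III F E u v w =
     ((\<chi> k. \<Sum>i\<in>UNIV. \<Sum>j\<in>UNIV. \<Sum>l\<in>UNIV. u$i * v$j * w$l * ipd [i, j, l] (\<lambda>y. F y $ k) 0),
      \<Sum>i\<in>UNIV. \<Sum>j\<in>UNIV. \<Sum>l\<in>UNIV. u$i * v$j * w$l * ipd [i, j, l] E 0)"

definition fz :: "(complex^'n::finite \<Rightarrow> complex) \<Rightarrow> complex^'n \<Rightarrow> complex^'n \<Rightarrow> complex^'n \<Rightarrow> complex" where
  "fz E u v w = (\<Sum>i\<in>UNIV. \<Sum>j\<in>UNIV. \<Sum>l\<in>UNIV. u$i * v$j * w$l * ipd [i, j, l] E 0)"

definition nfun :: "complex^'n::finite \<Rightarrow> complex \<Rightarrow> (complex^'n) \<times> complex \<Rightarrow> complex" where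
  "nfun c c0 p = cdot c (fst p) + c0 * snd p"

end

theory Submission
  imports Defs "HOL-Complex_Analysis.Cauchy_Integral_Formula"
begin

text \<open>On \<open>Z\<close> the contact form vanishes, i.e. \<open>\<partial>\<^sub>jE = F\<^sub>j - \<Sum>\<^sub>k y\<^sub>k \<partial>\<^sub>jF\<^sub>k\<close>.
  Differentiating once more and using the symmetry of second partials gives
  \<open>\<partial>\<^sub>iF\<^sub>j = \<partial>\<^sub>jF\<^sub>i\<close> and \<open>\<partial>\<^sub>i\<partial>\<^sub>jE = -\<Sum>\<^sub>k y\<^sub>k \<partial>\<^sub>i\<partial>\<^sub>jF\<^sub>k\<close>; hence at \<open>z\<close> the Hessian of \<open>E\<close>
  vanishes and \<open>\<partial>\<^sub>i\<partial>\<^sub>jF\<^sub>l(0) = -\<partial>\<^sub>l\<partial>\<^sub>i\<partial>\<^sub>jE(0)\<close>. So \<open>II(v,w) = (-f(e\<^sub>k,v,w))\<^sub>k\<close> with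
  vanishing last component, where the cubic form \<open>f = f\<^sup>z\<close> is totally symmetric. This gives (a);
  \<open>Im II\<close> is all of \<open>D\<^sub>z/T\<^sub>zZ\<close> iff no \<open>c \<noteq> 0\<close> annihilates it, i.e. iff no \<open>f(c,\<cdot>,\<cdot>)\<close>
  vanishes, which is (b) and, via \<open>c \<mapsto> f(c,\<cdot>,\<cdot>)\<close>, also (d). The last coordinate cuts out
  \<open>Im II\<close> and reads off \<open>f\<close> from \<open>III\<close>, giving (c). For (e), differentiate the equation of a
  hyperplane containing \<open>Z\<close> up to three times at \<open>z\<close> and use that \<open>c \<mapsto> f(c,\<cdot>,\<cdot>)\<close> is injective.

  The analytic input is that complex differentiable functions of several variables have
  holomorphic partial derivatives with symmetric mixed partials; this follows from the Cauchy
  integral formula on complex lines.\<close>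

section \<open>Holomorphic functions of several variables\<close>

lemma axis_scale: "t *s axis j 1 = axis j (t::complex)"
  by (simp add: vec_eq_iff axis_def)

lemma axis_zero [simp]: "axis j (0::'a::zero) = 0"
  by (simp add: vec_eq_iff axis_def)

lemma norm_axis_complex: "norm (axis j (t::complex)) = norm t"
  by (simp add: norm_eq_sqrt_inner inner_axis_axis)

lemma norm_vector_smult: "norm (c *s (h::complex^'n::finite)) = norm c * norm h"
  unfolding norm_vec_def by (simp add: L2_set_right_distrib norm_mult)

lemma sum_axis_mult: "(\<Sum>k\<in>UNIV. (axis i (1::complex))$k * c k) = c i"
proof -
  have "(\<Sum>k\<in>UNIV. (axis i (1::complex))$k * c k) = (\<Sum>k\<in>UNIV. if k = i then c k else 0)"
    by (rule sum.cong) (auto simp: axis_def)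
  then show ?thesis by simp
qed

lemma sum_delta_mult: "(\<Sum>k\<in>(UNIV::'n::finite set). (if k = i then 1 else 0) * (c k::complex)) = c i"
  using sum_axis_mult[of i c] by (simp add: axis_def)

lemma has_derivative_line:
  "((\<lambda>t. y + t *s h) has_derivative (\<lambda>s. s *s (h::complex^'n::finite))) (at t)"
proof -
  have "linear (\<lambda>s::complex. s *s h)"
    by (rule linearI) (simp_all add: vec_eq_iff algebra_simps)
  then have "((\<lambda>t. t *s h) has_derivative (\<lambda>s. s *s h)) (at t)"
    by (simp add: linear_conv_bounded_linear bounded_linear_imp_has_derivative)
  then show ?thesis using has_derivative_add[OF has_derivative_const[of y]] by simp
qed

lemma continuous_on_axis_line: "continuous_on S (\<lambda>\<zeta>. y + axis j (\<zeta>::complex))"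
proof -
  have "isCont (\<lambda>\<zeta>. y + axis j \<zeta>) \<zeta>" for \<zeta>
    using has_derivative_continuous[OF has_derivative_line[where y=y and h="axis j 1"]]
    by (simp add: axis_scale)
  then show ?thesis by (simp add: continuous_at_imp_continuous_on)
qed

definition cdiff :: "(complex^'n::finite \<Rightarrow> complex) \<Rightarrow> complex^'n \<Rightarrow> complex^'n \<Rightarrow> complex" where
  "cdiff g y h = (\<Sum>i\<in>UNIV. h$i * pd i g y)"

lemma cdiff_scale: "cdiff g y (c *s h) = c * cdiff g y h"
  by (simp add: cdiff_def sum_distrib_left algebra_simps)

lemma cdiff_add: "cdiff g y (h + k) = cdiff g y h + cdiff g y k"
  by (simp add: cdiff_def sum.distrib algebra_simps)

lemma cdiff_axis: "cdiff g y (axis j 1) = pd j g y"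
  unfolding cdiff_def by (rule sum_axis_mult)

lemma complex_linear_eq_sum_axis:
  assumes "linear D" "\<And>c v. D (c *s v) = (c::complex) * D v"
  shows "D h = (\<Sum>i\<in>UNIV. h$i * D (axis i 1))"
proof -
  have "D h = D (\<Sum>i\<in>UNIV. h$i *s axis i 1)" by (simp add: basis_expansion)
  also have "\<dots> = (\<Sum>i\<in>UNIV. D (h$i *s axis i 1))" by (rule linear_sum[OF assms(1)])
  also have "\<dots> = (\<Sum>i\<in>UNIV. h$i * D (axis i 1))" using assms(2) by simp
  finally show ?thesis .
qed

lemma has_field_derivative_along_line:
  fixes g :: "complex^'n::finite \<Rightarrow> complex"
  assumes "(g has_derivative D) (at (y + t *s h))" "\<And>c v. D (c *s v) = c * D v"
  shows "((\<lambda>t. g (y + t *s h)) has_field_derivative D h) (at t)"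
proof -
  have "(\<lambda>s. s * D h) = (*) (D h)" by (auto simp: fun_eq_iff mult.commute)
  then show ?thesis
    unfolding has_field_derivative_def
    using has_derivative_compose[OF has_derivative_line assms(1)] assms(2) by simp
qed

lemma cholo_on_has_derivative:
  assumes "cholo_on g U" "y \<in> U"
  shows "(g has_derivative cdiff g y) (at y)"
proof -
  obtain D where D: "(g has_derivative D) (at y)" "\<And>c v. D (c *s v) = c * D v"
    using assms unfolding cholo_on_def by blast
  have pd: "pd i g y = D (axis i 1)" for i
  proof -
    have "((\<lambda>t. g (y + t *s axis i 1)) has_field_derivative D (axis i 1)) (at 0)"
      by (rule has_field_derivative_along_line) (use D in auto)
    then show ?thesis unfolding pd_def by (simp add: axis_scale DERIV_imp_deriv)
  qed
  have "linear D"
    using D(1) has_derivative_bounded_linear bounded_linear.linear by blast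
  then have "D = cdiff g y"
    by (intro ext) (subst complex_linear_eq_sum_axis[of D, OF _ D(2)], simp_all add: cdiff_def pd)
  then show ?thesis using D by simp
qed

lemma cholo_on_line_derivative:
  assumes "cholo_on g U" "y + t *s h \<in> U"
  shows "((\<lambda>t. g (y + t *s h)) has_field_derivative cdiff g (y + t *s h) h) (at t)"
  by (rule has_field_derivative_along_line[OF cholo_on_has_derivative[OF assms]])
    (simp add: cdiff_scale)

lemma cholo_on_axis_line_derivative:
  assumes "cholo_on g U" "y + axis j t \<in> U"
  shows "((\<lambda>t. g (y + axis j t)) has_field_derivative pd j g (y + axis j t)) (at t)"
  using cholo_on_line_derivative[OF assms(1), of y t "axis j 1"] assms(2)
  by (simp add: axis_scale cdiff_axis)

lemma cholo_on_imp_continuous_on: "cholo_on g U \<Longrightarrow> continuous_on U g"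
  by (intro continuous_at_imp_continuous_on ballI has_derivative_continuous[OF cholo_on_has_derivative])

lemma holomorphic_on_ball_of_derivatives:
  fixes \<phi> :: "complex \<Rightarrow> complex"
  assumes "\<And>t. norm t \<le> \<rho> \<Longrightarrow> (\<phi> has_field_derivative \<phi>' t) (at t)"
  shows "continuous_on (cball 0 \<rho>) \<phi>" "\<phi> holomorphic_on ball 0 \<rho>"
proof -
  show "continuous_on (cball 0 \<rho>) \<phi>"
    using assms by (intro continuous_at_imp_continuous_on ballI DERIV_isCont) auto
  show "\<phi> holomorphic_on ball 0 \<rho>"
    unfolding holomorphic_on_def field_differentiable_def
  proof
    fix t :: complex assume "t \<in> ball 0 \<rho>"
    then show "\<exists>f'. (\<phi> has_field_derivative f') (at t within ball 0 \<rho>)"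
      using assms[of t] has_field_derivative_at_within by fastforce
  qed
qed

lemma Cauchy_integral_norm_bound:
  assumes int: "(f has_contour_integral (2 * pi * \<i> * X)) (circlepath 0 \<rho>)"
    and "\<rho> > 0" "B \<ge> 0" and bound: "\<And>\<zeta>. norm \<zeta> = \<rho> \<Longrightarrow> norm (f \<zeta>) \<le> B"
  shows "norm X \<le> B * \<rho>"
proof -
  have "norm (2 * pi * \<i> * X) \<le> B * (2 * pi * \<rho>)"
    using assms by (intro has_contour_integral_bound_circlepath[OF int]) auto
  then have "2 * pi * norm X \<le> 2 * pi * (B * \<rho>)"
    by (simp add: norm_mult algebra_simps)
  then show ?thesis using pi_gt_zero by (simp only: mult_le_cancel_left_pos[of "2 * pi"])
qed

lemma Cauchy_taylor2_bound:
  fixes \<phi> :: "complex \<Rightarrow> complex"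
  assumes cont: "continuous_on (cball 0 \<rho>) \<phi>" and hol: "\<phi> holomorphic_on ball 0 \<rho>"
    and rho: "\<rho> \<ge> 2" and M: "\<And>u. norm u = \<rho> \<Longrightarrow> norm (\<phi> u) \<le> M"
  shows "norm (\<phi> 1 - \<phi> 0 - deriv \<phi> 0) \<le> 2 * M / \<rho>^2"
proof -
  have M0: "0 \<le> M" using M[of "of_real \<rho>"] rho by (auto intro: order_trans[OF norm_ge_zero])
  have i1: "((\<lambda>u. \<phi> u / (u - 1)) has_contour_integral (2 * of_real pi * \<i> * \<phi> 1)) (circlepath 0 \<rho>)"
    by (rule Cauchy_integral_circlepath[OF cont hol]) (use rho in simp)
  have i0: "((\<lambda>u. \<phi> u / (u - 0)) has_contour_integral (2 * of_real pi * \<i> * \<phi> 0)) (circlepath 0 \<rho>)"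
    by (rule Cauchy_integral_circlepath[OF cont hol]) (use rho in simp)
  have i2: "((\<lambda>u. \<phi> u / (u - 0) ^ Suc 1) has_contour_integral ((2 * pi * \<i>) / (fact 1) * (deriv ^^ 1) \<phi> 0))
      (circlepath 0 \<rho>)"
    by (rule Cauchy_has_contour_integral_higher_derivative_circlepath[OF cont hol]) (use rho in simp)
  have "((\<lambda>u. \<phi> u / (u^2 * (u - 1))) has_contour_integral
      (2 * pi * \<i> * (\<phi> 1 - \<phi> 0 - deriv \<phi> 0))) (circlepath 0 \<rho>)"
  proof (rule has_contour_integral_eq)
    show "((\<lambda>u. \<phi> u / (u - 1) - \<phi> u / (u - 0) - \<phi> u / (u - 0) ^ Suc 1) has_contour_integral
      (2 * pi * \<i> * (\<phi> 1 - \<phi> 0 - deriv \<phi> 0))) (circlepath 0 \<rho>)"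
      using has_contour_integral_diff[OF has_contour_integral_diff[OF i1 i0] i2]
      by (simp add: algebra_simps)
    fix u assume "u \<in> path_image (circlepath 0 \<rho>)"
    then have "u \<noteq> 0" "u \<noteq> 1" using rho by auto
    then show "\<phi> u / (u - 1) - \<phi> u / (u - 0) - \<phi> u / (u - 0) ^ Suc 1 = \<phi> u / (u^2 * (u - 1))"
      by (simp add: field_simps power2_eq_square)
  qed
  moreover have "norm (\<phi> u / (u^2 * (u - 1))) \<le> 2 * M / \<rho>^3" if u: "norm u = \<rho>" for u
  proof -
    have "\<rho> - 1 \<le> norm (u - 1)" using norm_triangle_ineq2[of u 1] u by simp
    then have "\<rho>^2 * (\<rho> / 2) \<le> \<rho>^2 * norm (u - 1)" using rho by (intro mult_left_mono) auto
    then have "norm (\<phi> u) / (\<rho>^2 * norm (u - 1)) \<le> M / (\<rho>^2 * (\<rho> / 2))"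
      using M[of u] u rho M0 by (intro frac_le) auto
    then show ?thesis
      using u by (simp add: norm_divide norm_mult norm_power power3_eq_cube power2_eq_square mult.commute)
  qed
  ultimately have "norm (\<phi> 1 - \<phi> 0 - deriv \<phi> 0) \<le> 2 * M / \<rho>^3 * \<rho>"
    using rho M0 by (intro Cauchy_integral_norm_bound) auto
  also have "\<dots> = 2 * M / \<rho>^2" using rho by (simp add: power3_eq_cube power2_eq_square)
  finally show ?thesis .
qed

lemma cholo_on_pd_Cauchy_integral:
  assumes g: "cholo_on g U" and rho: "\<rho> > 0" and inU: "\<And>\<zeta>. norm \<zeta> \<le> \<rho> \<Longrightarrow> p + axis j \<zeta> \<in> U"
  shows "((\<lambda>\<zeta>. g (p + axis j \<zeta>) / \<zeta>^2) has_contour_integral (2 * pi * \<i> * pd j g p)) (circlepath 0 \<rho>)"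
proof -
  define \<phi> where "\<phi> \<zeta> = g (p + axis j \<zeta>)" for \<zeta>
  have der: "(\<phi> has_field_derivative pd j g (p + axis j t)) (at t)" if "norm t \<le> \<rho>" for t
    unfolding \<phi>_def by (rule cholo_on_axis_line_derivative[OF g inU[OF that]])
  have "((\<lambda>u. \<phi> u / (u - 0) ^ Suc 1) has_contour_integral ((2 * pi * \<i>) / (fact 1) * (deriv ^^ 1) \<phi> 0))
      (circlepath 0 \<rho>)"
    using holomorphic_on_ball_of_derivatives[OF der] rho
    by (intro Cauchy_has_contour_integral_higher_derivative_circlepath) auto
  moreover have "deriv \<phi> 0 = pd j g p" using DERIV_imp_deriv[OF der[of 0]] rho by simp
  ultimately show ?thesis by (simp add: \<phi>_def numeral_2_eq_2)
qed

lemma cholo_on_quadratic_remainder: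
  assumes g: "cholo_on g U" and y0: "y0 \<in> U"
  obtains r C where "r > 0" "C \<ge> 0"
    "\<And>y h. y \<in> ball y0 r \<Longrightarrow> norm h < r \<Longrightarrow> norm (g (y + h) - g y - cdiff g y h) \<le> C * (norm h)^2"
proof -
  have "open U" using g by (simp add: cholo_on_def)
  then obtain e where e: "e > 0" "cball y0 e \<subseteq> U"
    using open_contains_cball y0 by blast
  define R where "R = e / 4"
  have R: "R > 0" "cball y0 (4 * R) \<subseteq> U" using e by (auto simp: R_def)
  have "compact (g ` cball y0 (4 * R))"
    using continuous_on_subset[OF cholo_on_imp_continuous_on[OF g] R(2)]
    by (simp add: compact_continuous_image)
  then have "bounded (g ` cball y0 (4 * R))" by (rule compact_imp_bounded)
  then obtain M where "\<forall>z\<in>g ` cball y0 (4 * R). norm z \<le> M" by (auto simp: bounded_iff)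
  then have M: "\<And>x. x \<in> cball y0 (4 * R) \<Longrightarrow> norm (g x) \<le> M" by blast
  have M0: "0 \<le> M" using M[of y0] R by (auto intro: order_trans[OF norm_ge_zero])
  have est: "norm (g (y + h) - g y - cdiff g y h) \<le> M / (2 * R^2) * (norm h)^2"
    if y: "y \<in> ball y0 R" and h: "norm h < R" for y h
  proof (cases "h = 0")
    case True then show ?thesis by (simp add: cdiff_def)
  next
    case False
    then have hpos: "norm h > 0" by simp
    \<comment> \<open>the one-variable estimate for \<open>t \<mapsto> g (y + t h)\<close> on a disc of radius \<open>\<rho> \<ge> 2\<close>\<close>
    define \<rho> where "\<rho> = 2 * R / norm h"
    have rho: "\<rho> \<ge> 2" using h hpos R by (simp add: \<rho>_def field_simps)
    define \<phi> where "\<phi> t = g (y + t *s h)" for t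
    have inU: "y + t *s h \<in> cball y0 (4 * R)" if "norm t \<le> \<rho>" for t
    proof -
      have "norm (t *s h) \<le> \<rho> * norm h"
        using that hpos by (simp add: norm_vector_smult mult_right_mono)
      also have "\<dots> = 2 * R" using hpos by (simp add: \<rho>_def)
      finally have "norm (t *s h) \<le> 2 * R" .
      moreover have "dist y0 (y + t *s h) \<le> dist y0 y + norm (t *s h)"
        by (metis add_diff_cancel_left' dist_norm dist_triangle2 norm_minus_commute)
      ultimately show ?thesis using y R(1) by (simp add: dist_commute)
    qed
    have der: "(\<phi> has_field_derivative cdiff g (y + t *s h) h) (at t)" if "norm t \<le> \<rho>" for t
      unfolding \<phi>_def by (rule cholo_on_line_derivative[OF g]) (use inU[OF that] R(2) in blast)
    have "norm (\<phi> 1 - \<phi> 0 - deriv \<phi> 0) \<le> 2 * M / \<rho>^2"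
    proof (rule Cauchy_taylor2_bound[OF holomorphic_on_ball_of_derivatives[OF der] rho])
      fix u :: complex assume "norm u = \<rho>"
      then show "norm (\<phi> u) \<le> M" unfolding \<phi>_def by (intro M inU) simp
    qed
    moreover have "deriv \<phi> 0 = cdiff g y h" using DERIV_imp_deriv[OF der[of 0]] rho by simp
    moreover have "2 * M / \<rho>^2 = M / (2 * R^2) * (norm h)^2"
      using hpos R by (simp add: \<rho>_def field_simps power2_eq_square)
    ultimately show ?thesis by (simp add: \<phi>_def)
  qed
  have "0 \<le> M / (2 * R^2)" using R M0 by auto
  then show ?thesis using est by (rule that[OF R(1)])
qed

lemma pd_lipschitz_of_quadratic_remainder:
  fixes g :: "complex^'n::finite \<Rightarrow> complex"
  assumes rem: "\<And>y h. y \<in> ball y1 r \<Longrightarrow> norm h < r \<Longrightarrow> norm (g (y + h) - g y - cdiff g y h) \<le> C * (norm h)^2"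
    and d: "norm d < r / 2" and C: "C \<ge> 0"
  shows "norm (pd i g (y1 + d) - pd i g y1) \<le> 6 * C * norm d"
proof (cases "d = 0")
  case True then show ?thesis by simp
next
  case False
  then have dpos: "norm d > 0" by simp
  define u where "u = of_real (norm d) *s axis i (1::complex)"
  have nu: "norm u = norm d" by (simp add: u_def norm_vector_smult norm_axis_complex)
  have ndu: "norm (d + u) \<le> 2 * norm d" using norm_triangle_ineq[of d u] nu by simp
  have ndr: "norm d < r" "2 * norm d < r" using d norm_ge_zero[of d] by linarith+
  have y1: "y1 \<in> ball y1 r" "y1 + d \<in> ball y1 r"
    using ndr(1) le_less_trans[OF norm_ge_zero ndr(1)] by (simp_all add: dist_norm)
  \<comment> \<open>second-order differences of \<open>g\<close> over the triangle \<open>y1, y1 + d, y1 + d + u\<close>\<close>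
  have e1: "norm (g (y1 + (d + u)) - g y1 - cdiff g y1 (d + u)) \<le> C * (norm (d + u))^2"
    using rem y1 ndu ndr by auto
  have e2: "norm (g (y1 + d) - g y1 - cdiff g y1 d) \<le> C * (norm d)^2"
    using rem y1 ndr by auto
  have e3: "norm (g (y1 + d + u) - g (y1 + d) - cdiff g (y1 + d) u) \<le> C * (norm u)^2"
    using rem y1 nu ndr by (metis (no_types, lifting))
  have "cdiff g (y1 + d) u - cdiff g y1 u =
      (g (y1 + (d + u)) - g y1 - cdiff g y1 (d + u)) - (g (y1 + d) - g y1 - cdiff g y1 d)
       - (g (y1 + d + u) - g (y1 + d) - cdiff g (y1 + d) u)"
    by (simp add: cdiff_add algebra_simps)
  then have "norm (cdiff g (y1 + d) u - cdiff g y1 u)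
      \<le> C * (norm (d + u))^2 + C * (norm d)^2 + C * (norm u)^2"
    using e1 e2 e3 by (smt (verit) norm_diff_ineq norm_triangle_ineq4)
  also have "\<dots> \<le> C * (2 * norm d)^2 + C * (norm d)^2 + C * (norm d)^2"
    using ndu C nu by (intro add_mono mult_left_mono power_mono) auto
  also have "\<dots> = norm d * (6 * C * norm d)" by (simp add: power2_eq_square algebra_simps)
  finally have "norm (cdiff g (y1 + d) u - cdiff g y1 u) \<le> norm d * (6 * C * norm d)" .
  moreover have "norm (cdiff g (y1 + d) u - cdiff g y1 u) = norm d * norm (pd i g (y1 + d) - pd i g y1)"
    by (simp add: u_def cdiff_scale cdiff_axis norm_mult flip: right_diff_distrib)
  ultimately show ?thesis using dpos by simp
qed

lemma cholo_on_continuous_on_pd: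
  assumes g: "cholo_on g U"
  shows "continuous_on U (pd i g)"
proof (intro continuous_at_imp_continuous_on ballI)
  fix y1 assume "y1 \<in> U"
  then obtain r C where rC: "r > 0" "C \<ge> 0"
    "\<And>y h. y \<in> ball y1 r \<Longrightarrow> norm h < r \<Longrightarrow> norm (g (y + h) - g y - cdiff g y h) \<le> C * (norm h)^2"
    using cholo_on_quadratic_remainder[OF g] by metis
  show "isCont (pd i g) y1"
    unfolding continuous_at_eps_delta
  proof (intro allI impI)
    fix e :: real assume e: "e > 0"
    define \<delta> where "\<delta> = min (r / 2) (e / (6 * C + 1))"
    have "dist (pd i g x) (pd i g y1) < e" if "dist x y1 < \<delta>" for x
    proof -
      have d: "norm (x - y1) < r / 2" "norm (x - y1) < e / (6 * C + 1)"
        using that by (auto simp: dist_norm \<delta>_def)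
      have "norm (pd i g (y1 + (x - y1)) - pd i g y1) \<le> 6 * C * norm (x - y1)"
        by (rule pd_lipschitz_of_quadratic_remainder[OF rC(3) d(1) rC(2)])
      also have "\<dots> \<le> (6 * C + 1) * norm (x - y1)" by (simp add: algebra_simps)
      also have "\<dots> < e" using d(2) rC(2) by (simp add: field_simps)
      finally show ?thesis by (simp add: dist_norm)
    qed
    moreover have "\<delta> > 0" using rC e by (simp add: \<delta>_def)
    ultimately show "\<exists>\<delta>>0. \<forall>x. dist x y1 < \<delta> \<longrightarrow> dist (pd i g x) (pd i g y1) < e"
      by blast
  qed
qed

lemma has_derivative_of_quadratic_remainder:
  fixes f :: "'a::real_normed_vector \<Rightarrow> 'b::real_normed_vector"
  assumes L: "bounded_linear L" and d: "\<delta> > 0" and K: "K \<ge> 0"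
    and rem: "\<And>h. norm h < \<delta> \<Longrightarrow> norm (f (y + h) - f y - L h) \<le> K * (norm h)^2"
  shows "(f has_derivative L) (at y)"
  unfolding has_derivative_at_alt
proof (intro conjI L allI impI)
  fix e :: real assume e: "e > 0"
  have "norm (f x - f y - L (x - y)) \<le> e * norm (x - y)"
    if "norm (x - y) < min \<delta> (e / (K + 1))" for x
  proof -
    have h: "norm (x - y) < \<delta>" "(K + 1) * norm (x - y) \<le> e"
      using that K by (auto simp: field_simps)
    have "norm (f x - f y - L (x - y)) \<le> K * (norm (x - y))^2"
      using rem[OF h(1)] by simp
    also have "\<dots> \<le> (K + 1) * norm (x - y) * norm (x - y)"
      by (simp add: power2_eq_square algebra_simps)
    also have "\<dots> \<le> e * norm (x - y)" using h(2) by (intro mult_right_mono) auto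
    finally show ?thesis .
  qed
  moreover have "min \<delta> (e / (K + 1)) > 0" using d e K by simp
  ultimately show "\<exists>d>0. \<forall>x. norm (x - y) < d \<longrightarrow> norm (f x - f y - L (x - y)) \<le> e * norm (x - y)"
    by blast
qed

text \<open>Differentiating the Cauchy formula for \<open>pd j g\<close> under the integral sign; the uniform
  quadratic remainder estimate justifies it.\<close>

lemma cholo_on_pd_has_derivative:
  fixes g :: "complex^'n::finite \<Rightarrow> complex"
  assumes g: "cholo_on g U" and y: "y \<in> U"
  obtains \<rho> where "\<rho> > 0" "\<And>\<zeta>. norm \<zeta> \<le> \<rho> \<Longrightarrow> y + axis j \<zeta> \<in> U"
    "(pd j g has_derivative (\<lambda>h. \<Sum>i\<in>UNIV. h$i *
        (contour_integral (circlepath 0 \<rho>) (\<lambda>\<zeta>. pd i g (y + axis j \<zeta>) / \<zeta>^2) / (2 * pi * \<i>)))) (at y)"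
proof -
  obtain r C where rC: "r > 0" "C \<ge> 0"
    "\<And>w h. w \<in> ball y r \<Longrightarrow> norm h < r \<Longrightarrow> norm (g (w + h) - g w - cdiff g w h) \<le> C * (norm h)^2"
    using cholo_on_quadratic_remainder[OF g y] by metis
  have "open U" using g by (simp add: cholo_on_def)
  then obtain e where e: "e > 0" "cball y e \<subseteq> U"
    using open_contains_cball y by blast
  define \<rho> where "\<rho> = min (r / 2) (e / 2)"
  have rho: "\<rho> > 0" "\<rho> \<le> r / 2" "\<rho> \<le> e / 2" using rC e by (auto simp: \<rho>_def)
  have inU: "p + axis j \<zeta> \<in> U" if "norm (p - y) < \<rho>" "norm \<zeta> \<le> \<rho>" for p \<zeta>
  proof -
    have "dist y (p + axis j \<zeta>) \<le> norm (p - y) + norm (axis j \<zeta>)"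
      by (metis add_diff_eq diff_add_eq dist_norm norm_minus_commute norm_triangle_ineq)
    also have "\<dots> < e" using that rho by (simp add: norm_axis_complex)
    finally show ?thesis using e(2) by auto
  qed
  define I where "I i = contour_integral (circlepath 0 \<rho>) (\<lambda>\<zeta>. pd i g (y + axis j \<zeta>) / \<zeta>^2)" for i
  have hasI: "((\<lambda>\<zeta>. pd i g (y + axis j \<zeta>) / \<zeta>^2) has_contour_integral I i) (circlepath 0 \<rho>)" for i
    unfolding I_def
  proof (intro has_contour_integral_integral contour_integrable_continuous_circlepath)
    have "(\<lambda>\<zeta>. y + axis j \<zeta>) ` path_image (circlepath 0 \<rho>) \<subseteq> U"
      using inU[of y] rho by auto
    then show "continuous_on (path_image (circlepath 0 \<rho>)) (\<lambda>\<zeta>. pd i g (y + axis j \<zeta>) / \<zeta>^2)"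
      by (intro continuous_on_divide continuous_on_compose2[OF cholo_on_continuous_on_pd[OF g]
            continuous_on_axis_line] continuous_intros) (use rho in auto)
  qed
  define L where "L h = (\<Sum>i\<in>UNIV. h$i * (I i / (2 * pi * \<i>)))" for h :: "complex^'n"
  have "(pd j g has_derivative L) (at y)"
  proof (rule has_derivative_of_quadratic_remainder[OF _ rho(1), of _ "C / \<rho>"])
    show "bounded_linear L" unfolding L_def
      by (intro bounded_linear_sum bounded_linear_mult_const bounded_linear_vec_nth)
    show "0 \<le> C / \<rho>" using rC rho by simp
    fix h :: "complex^'n" assume h: "norm h < \<rho>"
    have cy: "((\<lambda>\<zeta>. g (y + axis j \<zeta>) / \<zeta>^2) has_contour_integral (2 * pi * \<i> * pd j g y)) (circlepath 0 \<rho>)"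
      by (rule cholo_on_pd_Cauchy_integral[OF g rho(1)]) (use inU[of y] rho in auto)
    have ch: "((\<lambda>\<zeta>. g (y + h + axis j \<zeta>) / \<zeta>^2) has_contour_integral (2 * pi * \<i> * pd j g (y + h)))
        (circlepath 0 \<rho>)"
      by (rule cholo_on_pd_Cauchy_integral[OF g rho(1)]) (use inU[of "y + h"] h in auto)
    have hs: "((\<lambda>\<zeta>. \<Sum>i\<in>UNIV. h$i * (pd i g (y + axis j \<zeta>) / \<zeta>^2)) has_contour_integral
        (\<Sum>i\<in>UNIV. h$i * I i)) (circlepath 0 \<rho>)"
      by (intro has_contour_integral_sum has_contour_integral_lmul hasI) auto
    \<comment> \<open>the three Cauchy integrals combine into one of the quadratic remainder along the circle\<close>
    have "((\<lambda>\<zeta>. (g (y + axis j \<zeta> + h) - g (y + axis j \<zeta>) - cdiff g (y + axis j \<zeta>) h) / \<zeta>^2)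
        has_contour_integral (2 * pi * \<i> * pd j g (y + h) - 2 * pi * \<i> * pd j g y - (\<Sum>i\<in>UNIV. h$i * I i)))
        (circlepath 0 \<rho>)"
      using has_contour_integral_diff[OF has_contour_integral_diff[OF ch cy] hs]
      by (simp add: diff_divide_distrib cdiff_def sum_divide_distrib add_ac)
    moreover have "2 * pi * \<i> * pd j g (y + h) - 2 * pi * \<i> * pd j g y - (\<Sum>i\<in>UNIV. h$i * I i)
        = 2 * pi * \<i> * (pd j g (y + h) - pd j g y - L h)"
      by (simp add: L_def algebra_simps sum_distrib_left)
    ultimately have "((\<lambda>\<zeta>. (g (y + axis j \<zeta> + h) - g (y + axis j \<zeta>) - cdiff g (y + axis j \<zeta>) h) / \<zeta>^2)
        has_contour_integral (2 * pi * \<i> * (pd j g (y + h) - pd j g y - L h))) (circlepath 0 \<rho>)"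
      by simp
    moreover have "norm ((g (y + axis j \<zeta> + h) - g (y + axis j \<zeta>) - cdiff g (y + axis j \<zeta>) h) / \<zeta>^2)
        \<le> C * (norm h)^2 / \<rho>^2" if "norm \<zeta> = \<rho>" for \<zeta>
    proof -
      have "y + axis j \<zeta> \<in> ball y r" "norm h < r"
        using that h rho by (auto simp: dist_norm norm_axis_complex)
      then show ?thesis
        using rC(3) that by (simp add: norm_divide norm_power divide_right_mono)
    qed
    ultimately have "norm (pd j g (y + h) - pd j g y - L h) \<le> C * (norm h)^2 / \<rho>^2 * \<rho>"
      using rho rC by (intro Cauchy_integral_norm_bound) auto
    then show "norm (pd j g (y + h) - pd j g y - L h) \<le> C / \<rho> * (norm h)^2"
      using rho by (simp add: power2_eq_square)
  qed
  then show ?thesis using inU[of y] rho(1) unfolding L_def I_def by (intro that[OF rho(1)]) auto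
qed

lemma cholo_on_pd:
  assumes g: "cholo_on g U"
  shows "cholo_on (pd j g) U"
  unfolding cholo_on_def
proof (intro conjI ballI)
  show "open U" using g by (simp add: cholo_on_def)
  fix y assume "y \<in> U"
  then obtain \<rho> where "(pd j g has_derivative (\<lambda>h. \<Sum>i\<in>UNIV. h$i *
      (contour_integral (circlepath 0 \<rho>) (\<lambda>\<zeta>. pd i g (y + axis j \<zeta>) / \<zeta>^2) / (2 * pi * \<i>)))) (at y)"
    using cholo_on_pd_has_derivative[OF g, where j=j] by blast
  then show "\<exists>D. (pd j g has_derivative D) (at y) \<and> (\<forall>c v. D (c *s v) = c * D v)"
    by (intro exI conjI allI, assumption) (simp add: sum_distrib_left algebra_simps)
qed

lemma pd_commute:
  assumes g: "cholo_on g U" and y: "y \<in> U"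
  shows "pd i (pd j g) y = pd j (pd i g) y"
proof -
  obtain \<rho> where rho: "\<rho> > 0" "\<And>\<zeta>. norm \<zeta> \<le> \<rho> \<Longrightarrow> y + axis j \<zeta> \<in> U" and
    D: "(pd j g has_derivative (\<lambda>h. \<Sum>k\<in>UNIV. h$k *
        (contour_integral (circlepath 0 \<rho>) (\<lambda>\<zeta>. pd k g (y + axis j \<zeta>) / \<zeta>^2) / (2 * pi * \<i>)))) (at y)"
    using cholo_on_pd_has_derivative[OF g y, where j=j] by blast
  have "pd i (pd j g) y = cdiff (pd j g) y (axis i 1)" by (simp add: cdiff_axis)
  also have "\<dots> = contour_integral (circlepath 0 \<rho>) (\<lambda>\<zeta>. pd i g (y + axis j \<zeta>) / \<zeta>^2) / (2 * pi * \<i>)"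
    unfolding has_derivative_unique[OF cholo_on_has_derivative[OF cholo_on_pd[OF g] y] D]
    by (rule sum_axis_mult)
  also have "contour_integral (circlepath 0 \<rho>) (\<lambda>\<zeta>. pd i g (y + axis j \<zeta>) / \<zeta>^2) = 2 * pi * \<i> * pd j (pd i g) y"
    by (rule contour_integral_unique[OF cholo_on_pd_Cauchy_integral[OF cholo_on_pd[OF g] rho]])
  finally show ?thesis by simp
qed

definition has_pd :: "'n::finite \<Rightarrow> (complex^'n \<Rightarrow> complex) \<Rightarrow> complex^'n \<Rightarrow> complex \<Rightarrow> bool" where
  "has_pd i f y d \<longleftrightarrow> ((\<lambda>t. f (y + axis i t)) has_field_derivative d) (at 0)"

lemma pd_eqI: "has_pd i f y d \<Longrightarrow> pd i f y = d"
  unfolding has_pd_def pd_def by (rule DERIV_imp_deriv)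

lemma has_pd_cholo_on: "cholo_on f U \<Longrightarrow> y \<in> U \<Longrightarrow> has_pd i f y (pd i f y)"
  unfolding has_pd_def using cholo_on_axis_line_derivative[of f U y i 0] by simp

lemma has_pd_const: "has_pd i (\<lambda>y. c) y 0"
  unfolding has_pd_def by simp

lemma has_pd_coord: "has_pd i (\<lambda>y. y $ k) y (if k = i then 1 else 0)"
proof -
  have "((\<lambda>t. y $ k + (if k = i then t else 0)) has_field_derivative (0 + (if k = i then 1 else 0))) (at 0)"
    by (intro DERIV_add DERIV_const) (auto intro: DERIV_ident)
  then show ?thesis unfolding has_pd_def by (simp add: axis_def)
qed

lemma has_pd_add: "has_pd i f y a \<Longrightarrow> has_pd i h y b \<Longrightarrow> has_pd i (\<lambda>y. f y + h y) y (a + b)"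
  unfolding has_pd_def by (rule DERIV_add)

lemma has_pd_diff: "has_pd i f y a \<Longrightarrow> has_pd i h y b \<Longrightarrow> has_pd i (\<lambda>y. f y - h y) y (a - b)"
  unfolding has_pd_def by (rule DERIV_diff)

lemma has_pd_minus: "has_pd i f y a \<Longrightarrow> has_pd i (\<lambda>y. - f y) y (- a)"
  unfolding has_pd_def by (rule DERIV_minus)

lemma has_pd_cmult: "has_pd i f y a \<Longrightarrow> has_pd i (\<lambda>y. c * f y) y (c * a)"
  unfolding has_pd_def by (rule DERIV_cmult)

lemma has_pd_mult: "has_pd i f y a \<Longrightarrow> has_pd i h y b \<Longrightarrow> has_pd i (\<lambda>y. f y * h y) y (a * h y + f y * b)"
  unfolding has_pd_def using DERIV_mult'[of "\<lambda>t. f (y + axis i t)" a 0 UNIV "\<lambda>t. h (y + axis i t)" b]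
  by (simp add: algebra_simps)

lemma has_pd_sum:
  "(\<And>k. k \<in> S \<Longrightarrow> has_pd i (f k) y (a k)) \<Longrightarrow> has_pd i (\<lambda>y. \<Sum>k\<in>S. f k y) y (\<Sum>k\<in>S. a k)"
  unfolding has_pd_def by (rule DERIV_sum)

lemma pd_cong_open:
  assumes "open W" "y \<in> W" and eq: "\<And>x. x \<in> W \<Longrightarrow> f x = h x"
  shows "pd i f y = pd i h y"
  unfolding pd_def
proof (rule deriv_cong_ev)
  have "\<And>t. isCont (\<lambda>t. y + axis i t) t"
    using continuous_on_axis_line[of UNIV y i] by (simp add: continuous_on_eq_continuous_at)
  from continuous_open_vimage[OF assms(1) this] have "open {t. y + axis i t \<in> W}"
    by (simp add: vimage_def)
  moreover have "0 \<in> {t. y + axis i t \<in> W}" using assms by simp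
  ultimately show "\<forall>\<^sub>F t in nhds 0. f (y + axis i t) = h (y + axis i t)"
    unfolding eventually_nhds using eq by blast
qed simp

lemma ipd_eq_0_on_open:
  assumes "open W" "\<And>x. x \<in> W \<Longrightarrow> g x = 0" "y \<in> W"
  shows "ipd ds g y = 0"
  using assms(3)
proof (induction ds arbitrary: y)
  case Nil then show ?case using assms(2) by simp
next
  case (Cons i ds)
  then have "pd i (ipd ds g) y = pd i (\<lambda>_. 0) y"
    by (intro pd_cong_open[OF assms(1)]) auto
  then show ?case by (simp add: pd_eqI[OF has_pd_const])
qed

section \<open>The cubic form and the image of the second fundamental form\<close>

lemma fz_axis_first: "fz E (axis k 1) v w = (\<Sum>j\<in>UNIV. \<Sum>l\<in>UNIV. v$j * w$l * ipd [k, j, l] E 0)"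
proof -
  have "fz E u v w = (\<Sum>i\<in>UNIV. u$i * (\<Sum>j\<in>UNIV. \<Sum>l\<in>UNIV. v$j * w$l * ipd [i, j, l] E 0))" for u
    by (simp add: fz_def sum_distrib_left mult.assoc)
  then show ?thesis by (simp add: sum_axis_mult)
qed

lemma fz_expand_first: "fz E u v w = (\<Sum>i\<in>UNIV. u$i * fz E (axis i 1) v w)"
  unfolding fz_axis_first by (simp add: fz_def sum_distrib_left mult.assoc)

lemma fz_diff_first: "fz E (u - u') v w = fz E u v w - fz E u' v w"
  by (simp add: fz_def algebra_simps sum_subtractf)

lemma fz_minus_first: "fz E (- u) v w = - fz E u v w"
  by (simp add: fz_def sum_negf)

lemma fz_zero_first [simp]: "fz E 0 v w = 0"
  by (simp add: fz_def)

lemma fz_axis_axis: "fz E u (axis i 1) (axis j 1) = (\<Sum>k\<in>UNIV. u$k * ipd [k, i, j] E 0)"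
proof -
  have "fz E u (axis i 1) (axis j 1)
      = (\<Sum>k\<in>UNIV. u$k * (\<Sum>i'\<in>UNIV. (axis i 1)$i' * (\<Sum>j'\<in>UNIV. (axis j 1)$j' * ipd [k, i', j'] E 0)))"
    by (simp add: fz_def sum_distrib_left mult.assoc)
  then show ?thesis by (simp add: sum_axis_mult)
qed

lemma fz_expand_last2: "fz E u v w = (\<Sum>i\<in>UNIV. \<Sum>j\<in>UNIV. v$i * w$j * fz E u (axis i 1) (axis j 1))"
proof -
  have "fz E u v w = (\<Sum>i\<in>UNIV. \<Sum>k\<in>UNIV. \<Sum>j\<in>UNIV. u$k * v$i * w$j * ipd [k, i, j] E 0)"
    unfolding fz_def by (rule sum.swap)
  also have "\<dots> = (\<Sum>i\<in>UNIV. \<Sum>j\<in>UNIV. \<Sum>k\<in>UNIV. u$k * v$i * w$j * ipd [k, i, j] E 0)"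
    by (intro sum.cong refl sum.swap)
  also have "\<dots> = (\<Sum>i\<in>UNIV. \<Sum>j\<in>UNIV. v$i * w$j * fz E u (axis i 1) (axis j 1))"
    by (simp add: fz_axis_axis sum_distrib_left mult_ac)
  finally show ?thesis .
qed

lemma fz_swap12_of_symmetric:
  assumes "\<And>l i j. ipd [l, i, j] E 0 = ipd [i, l, j] E 0"
  shows "fz E u v w = fz E v u w"
proof -
  have "fz E v u w = (\<Sum>j\<in>UNIV. \<Sum>i\<in>UNIV. \<Sum>l\<in>UNIV. v$i * u$j * w$l * ipd [i, j, l] E 0)"
    unfolding fz_def by (rule sum.swap)
  also have "\<dots> = fz E u v w"
    unfolding fz_def by (intro sum.cong refl, subst assms) (simp add: mult_ac)
  finally show ?thesis by simp
qed

lemma cdot_axis: "cdot c (axis k 1) = c $ k"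
  using sum_axis_mult[of k "\<lambda>i. c $ i"] by (simp add: cdot_def mult.commute)

lemma cdot_sum: "cdot c (\<Sum>l\<in>A. x l) = (\<Sum>l\<in>A. cdot c (x l))"
  unfolding cdot_def by (simp add: sum_component sum_distrib_left) (rule sum.swap)

text \<open>HOL-Analysis only knows real subspaces; closure under \<open>\<i>\<close> makes the real
  orthogonal complement complex.\<close>

lemma proper_complex_subspace_annihilator:
  fixes S :: "(complex^'n::finite) set"
  assumes S: "subspace S" "S \<noteq> UNIV" and iS: "\<And>x. x \<in> S \<Longrightarrow> \<i> *s x \<in> S"
  obtains c where "c \<noteq> 0" "\<And>x. x \<in> S \<Longrightarrow> cdot c x = 0"
proof -
  have "span S = S" using S(1) by simp
  then have "dim S < DIM(complex^'n)"
    using S(2) dim_eq_full dim_subset_UNIV[of S] by (metis le_neq_implies_less)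
  then obtain a where a: "a \<noteq> 0" "\<And>y. y \<in> span S \<Longrightarrow> orthogonal a y"
    using orthogonal_to_subspace_exists by blast
  define c where "c = (\<chi> i. cnj (a $ i))"
  have re: "Re (cdot c x) = inner a x" for x
    by (simp add: c_def cdot_def inner_vec_def inner_complex_def Re_sum)
  have "cdot c x = 0" if x: "x \<in> S" for x
  proof -
    have "Re (cdot c x) = 0" "Re (cdot c (\<i> *s x)) = 0"
      using a(2)[of x] a(2)[of "\<i> *s x"] iS[OF x] x \<open>span S = S\<close> by (simp_all add: re orthogonal_def)
    moreover have "cdot c (\<i> *s x) = \<i> * cdot c x"
      by (simp add: cdot_def sum_distrib_left mult_ac)
    ultimately show ?thesis by (simp add: complex_eq_iff)
  qed
  moreover have "c \<noteq> 0" using a(1) by (simp add: c_def vec_eq_iff)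
  ultimately show ?thesis using that by blast
qed

lemma DmodT_eq: "DmodT = {p. snd p = 0}"
proof (intro set_eqI iffI)
  fix p :: "(complex^'n::finite) \<times> complex"
  assume "p \<in> DmodT"
  then obtain xi where "p = quotT xi" "contact_form (0, 0, 0) xi = 0"
    unfolding DmodT_def Dz_def by blast
  then show "p \<in> {p. snd p = 0}" by (cases xi) (auto simp: quotT_def contact_form_def cdot_def)
next
  fix p :: "(complex^'n::finite) \<times> complex"
  assume "p \<in> {p. snd p = 0}"
  then show "p \<in> DmodT"
    unfolding DmodT_def Dz_def
    by (intro image_eqI[of _ _ "(0, fst p, 0)"]) (auto simp: quotT_def prod_eq_iff contact_form_def cdot_def)
qed

lemma sum_II_in_ImII: "(\<Sum>l<(m::nat). II F E (v l) (w l)) \<in> ImII F E"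
  unfolding ImII_def by (intro CollectI exI[of _ m] exI[of _ v] exI[of _ w]) simp

lemma zero_in_ImII: "0 \<in> ImII F E"
  using sum_II_in_ImII[where m=0] by simp

lemma ImII_add_II:
  assumes "p \<in> ImII F E"
  shows "p + II F E v w \<in> ImII F E"
proof -
  obtain m vs ws where p: "p = (\<Sum>l<(m::nat). II F E (vs l) (ws l))"
    using assms unfolding ImII_def by blast
  have "p + II F E v w = (\<Sum>l<Suc m. II F E ((vs(m := v)) l) ((ws(m := w)) l))"
    unfolding p by (simp add: sum.lessThan_Suc)
  then show ?thesis by (metis sum_II_in_ImII)
qed

lemma II_in_ImII: "II F E v w \<in> ImII F E"
  using ImII_add_II[OF zero_in_ImII] by simp

lemma ImII_add:
  assumes p: "p \<in> ImII F E" and "q \<in> ImII F E"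
  shows "p + q \<in> ImII F E"
proof -
  obtain m vs ws where q: "q = (\<Sum>l<(m::nat). II F E (vs l) (ws l))"
    using assms(2) unfolding ImII_def by blast
  have "p + (\<Sum>l<m. II F E (vs l) (ws l)) \<in> ImII F E" for m
    by (induction m) (simp_all add: p add.assoc[symmetric] ImII_add_II)
  then show ?thesis by (simp add: q)
qed

lemma fst_ImII_smult:
  assumes "p \<in> ImII F E"
  shows "c *s fst p \<in> fst ` ImII F E"
proof -
  obtain m vs ws where p: "p = (\<Sum>l<(m::nat). II F E (vs l) (ws l))"
    using assms unfolding ImII_def by blast
  have "fst (II F E (c *s v) w) = c *s fst (II F E v w)" for v w
    by (simp add: II_def vec_eq_iff sum_distrib_left mult_ac)
  then have "c *s fst p = fst (\<Sum>l<m. II F E (c *s vs l) (ws l))"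
    by (simp add: p fst_sum vec_eq_iff sum_distrib_left sum_component)
  moreover have "(\<Sum>l<m. II F E (c *s vs l) (ws l)) \<in> ImII F E"
    by (rule sum_II_in_ImII)
  ultimately show ?thesis by blast
qed

lemma subspace_fst_ImII: "subspace (fst ` ImII F E)"
  unfolding subspace_def
proof (intro conjI ballI allI)
  show "0 \<in> fst ` ImII F E" using zero_in_ImII by force
  fix x y assume "x \<in> fst ` ImII F E" "y \<in> fst ` ImII F E"
  then show "x + y \<in> fst ` ImII F E" using ImII_add by force
next
  fix r :: real and x assume "x \<in> fst ` ImII F E"
  then have "of_real r *s x \<in> fst ` ImII F E" using fst_ImII_smult by blast
  moreover have "of_real r *s x = r *\<^sub>R x" by (simp add: vec_eq_iff scaleR_conv_of_real[where 'a=complex])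
  ultimately show "r *\<^sub>R x \<in> fst ` ImII F E" by simp
qed

section \<open>Legendrian germs in adapted coordinates\<close>

context
  fixes F :: "complex^'n::finite \<Rightarrow> complex^'n" and E :: "complex^'n \<Rightarrow> complex" and U
  assumes leg: "adapted_legendrian F E U"
begin

abbreviation "Fk k \<equiv> (\<lambda>y. F y $ k)"

lemma legendrian_germ:
  "open U" "0 \<in> U" "cholo_on (Fk k) U" "cholo_on E U" "F 0 = 0" "E 0 = 0"
  "pd j (Fk k) 0 = 0" "pd j E 0 = 0"
  using leg unfolding adapted_legendrian_def by auto

lemma pd_E_contact:
  assumes "y \<in> U"
  shows "pd j E y = F y $ j - (\<Sum>k\<in>UNIV. y$k * pd j (Fk k) y)"
proof -
  have "contact_form (y, F y, E y) (dparam F E y (axis j 1)) = 0"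
    using leg assms unfolding adapted_legendrian_def by blast
  then show ?thesis
    by (simp add: contact_form_def dparam_def cdot_def sum_axis_mult mult.commute[of _ "axis j 1 $ _"])
qed

lemma pd_pd_E_contact:
  assumes y: "y \<in> U"
  shows "pd i (pd j E) y = pd i (Fk j) y - pd j (Fk i) y - (\<Sum>k\<in>UNIV. y$k * pd i (pd j (Fk k)) y)"
proof -
  have "pd i (pd j E) y = pd i (\<lambda>y. F y $ j - (\<Sum>k\<in>UNIV. y$k * pd j (Fk k) y)) y"
    by (rule pd_cong_open[OF legendrian_germ(1) y pd_E_contact])
  also have "\<dots> = pd i (Fk j) y
      - (\<Sum>k\<in>UNIV. (if k = i then 1 else 0) * pd j (Fk k) y + y$k * pd i (pd j (Fk k)) y)"
    by (intro pd_eqI has_pd_diff has_pd_sum has_pd_mult has_pd_cholo_on[where U=U] has_pd_coord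
        cholo_on_pd[where U=U] legendrian_germ y)
  finally show ?thesis by (simp add: sum.distrib sum_delta_mult)
qed

text \<open>The symmetry of the Hessian of \<open>E\<close> turns \<open>pd_pd_E_contact\<close> into the symmetry of the
  Jacobian of \<open>F\<close>.\<close>

lemma pd_F_commute:
  assumes y: "y \<in> U"
  shows "pd i (Fk j) y = pd j (Fk i) y"
proof -
  have "pd i (pd j E) y = pd j (pd i E) y" by (rule pd_commute[OF legendrian_germ(4) y])
  moreover have "pd i (pd j (Fk k)) y = pd j (pd i (Fk k)) y" for k
    by (rule pd_commute[OF legendrian_germ(3) y])
  ultimately show ?thesis
    using pd_pd_E_contact[OF y, of i j] pd_pd_E_contact[OF y, of j i] by (simp add: algebra_simps)
qed

lemma pd_pd_E_eq_sum:
  assumes "y \<in> U"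
  shows "pd i (pd j E) y = - (\<Sum>k\<in>UNIV. y$k * pd i (pd j (Fk k)) y)"
  using pd_pd_E_contact[OF assms, of i j] pd_F_commute[OF assms, of i j] by simp

lemma second_pd_E_origin: "ipd [i, j] E 0 = 0"
  using pd_pd_E_eq_sum[OF legendrian_germ(2), of i j] by simp

lemma second_pd_F_origin: "ipd [i, j] (Fk l) 0 = - ipd [l, i, j] E 0"
proof -
  have "ipd [l, i, j] E 0 = pd l (\<lambda>y. - (\<Sum>k\<in>UNIV. y$k * pd i (pd j (Fk k)) y)) 0"
    using pd_cong_open[OF legendrian_germ(1,2) pd_pd_E_eq_sum] by simp
  also have "\<dots> = - (\<Sum>k\<in>UNIV. (if k = l then 1 else 0) * pd i (pd j (Fk k)) 0
      + (0::complex^'n)$k * pd l (pd i (pd j (Fk k))) 0)"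
    by (intro pd_eqI has_pd_minus has_pd_sum has_pd_mult has_pd_cholo_on[where U=U] has_pd_coord
        cholo_on_pd[where U=U] legendrian_germ)
  finally show ?thesis by (simp add: sum_delta_mult)
qed

lemma fz_swap12: "fz E u v w = fz E v u w"
proof (rule fz_swap12_of_symmetric)
  fix l i j
  show "ipd [l, i, j] E 0 = ipd [i, l, j] E 0"
    using pd_commute[OF cholo_on_pd[OF legendrian_germ(4)] legendrian_germ(2), of l i j] by simp
qed

lemma II_eq_fz: "II F E v w = (\<chi> k. - fz E (axis k 1) v w, 0)"
  by (simp add: II_def fz_axis_first vec_eq_iff second_pd_F_origin[simplified] second_pd_E_origin[simplified] sum_negf)

lemma cdot_II: "cdot c (fst (II F E v w)) = - fz E c v w"
  by (simp add: II_eq_fz cdot_def sum_negf fz_expand_first[of E c v w])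

lemma II_null_iff: "(\<forall>w. II F E v w = 0) \<longleftrightarrow> (\<forall>a b. fz E v a b = 0)"
proof
  assume "\<forall>w. II F E v w = 0"
  then have null: "fz E (axis k 1) v w = 0" for k w
    by (simp add: II_eq_fz vec_eq_iff zero_prod_def)
  show "\<forall>a b. fz E v a b = 0"
  proof (intro allI)
    fix a b
    have "fz E v a b = (\<Sum>k\<in>UNIV. a$k * fz E (axis k 1) v b)"
      by (subst fz_swap12) (rule fz_expand_first)
    then show "fz E v a b = 0" by (simp add: null)
  qed
next
  assume "\<forall>a b. fz E v a b = 0"
  then have "fz E (axis k 1) v w = 0" for k w by (simp add: fz_swap12[of "axis k 1"])
  then show "\<forall>w. II F E v w = 0" by (simp add: II_eq_fz vec_eq_iff zero_prod_def)
qed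

lemma ImII_subset_DmodT: "ImII F E \<subseteq> DmodT"
proof
  fix p assume "p \<in> ImII F E"
  then obtain m v w where "p = (\<Sum>l<(m::nat). II F E (v l) (w l))" unfolding ImII_def by blast
  then show "p \<in> DmodT" by (simp add: DmodT_eq snd_sum II_eq_fz)
qed

lemma fst_ImII_eq_UNIV:
  assumes nondeg: "\<forall>v. (\<forall>w. II F E v w = 0) \<longrightarrow> v = 0"
  shows "fst ` ImII F E = UNIV"
proof (rule ccontr)
  assume "fst ` ImII F E \<noteq> UNIV"
  then obtain c where c: "c \<noteq> 0" "\<And>x. x \<in> fst ` ImII F E \<Longrightarrow> cdot c x = 0"
    using proper_complex_subspace_annihilator[OF subspace_fst_ImII] fst_ImII_smult by blast
  have "fz E c a b = 0" for a b
    using c(2)[OF imageI[OF II_in_ImII]] by (simp add: cdot_II)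
  then show False using nondeg c(1) II_null_iff by blast
qed

lemma ImII_eq_DmodT_iff: "ImII F E = DmodT \<longleftrightarrow> (\<forall>v. (\<forall>w. II F E v w = 0) \<longrightarrow> v = 0)"
proof
  assume eq: "ImII F E = DmodT"
  show "\<forall>v. (\<forall>w. II F E v w = 0) \<longrightarrow> v = 0"
  proof (intro allI impI)
    fix v assume null: "\<forall>w. II F E v w = 0"
    have "v $ k = 0" for k
    proof -
      have "(axis k 1, 0) \<in> ImII F E" using eq by (simp add: DmodT_eq)
      then obtain m vs ws where "(axis k 1, 0) = (\<Sum>l<(m::nat). II F E (vs l) (ws l))"
        unfolding ImII_def by blast
      then have "cdot v (axis k 1) = (\<Sum>l<m. cdot v (fst (II F E (vs l) (ws l))))"
        by (metis cdot_sum fst_conv fst_sum)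
      also have "\<dots> = 0" using null II_null_iff by (simp add: cdot_II)
      finally show ?thesis by (simp add: cdot_axis)
    qed
    then show "v = 0" by (simp add: vec_eq_iff)
  qed
next
  assume "\<forall>v. (\<forall>w. II F E v w = 0) \<longrightarrow> v = 0"
  then have full: "fst ` ImII F E = UNIV" by (rule fst_ImII_eq_UNIV)
  have "p \<in> ImII F E" if "p \<in> DmodT" for p
  proof -
    obtain q where q: "q \<in> ImII F E" "fst q = fst p" using full by (metis UNIV_I imageE)
    then have "snd q = snd p" using that ImII_subset_DmodT by (auto simp: DmodT_eq)
    then show ?thesis using q by (metis prod.expand)
  qed
  then show "ImII F E = DmodT" using ImII_subset_DmodT by blast
qed

lemma inj_fz:
  assumes "ImII F E = DmodT"
  shows "inj (\<lambda>v w1 w2. fz E v w1 w2)"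
proof (rule injI)
  fix x y assume "(\<lambda>w1 w2. fz E x w1 w2) = (\<lambda>w1 w2. fz E y w1 w2)"
  then have "\<forall>a b. fz E (x - y) a b = 0" by (simp add: fz_diff_first fun_eq_iff)
  then have "x - y = 0" using assms ImII_eq_DmodT_iff II_null_iff by blast
  then show "x = y" by simp
qed

lemma nfun_II: "nfun c c0 (II F E w1 w2) = fz E (- c) w1 w2"
  using cdot_II[of c w1 w2] by (simp add: nfun_def fz_minus_first II_eq_fz[of w1 w2])

lemma II_functionals_eq_fz_system:
  "{(\<lambda>w1 w2. nfun c c0 (II F E w1 w2)) | c c0. True} = {(\<lambda>w1 w2. fz E v w1 w2) | v. True}"
proof (intro set_eqI iffI)
  fix f assume "f \<in> {(\<lambda>w1 w2. nfun c c0 (II F E w1 w2)) | c c0. True}"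
  then show "f \<in> {(\<lambda>w1 w2. fz E v w1 w2) | v. True}" by (auto simp: nfun_II)
next
  fix f assume "f \<in> {(\<lambda>w1 w2. fz E v w1 w2) | v. True}"
  then obtain v where "f = (\<lambda>w1 w2. nfun (- v) 0 (II F E w1 w2))" by (auto simp: nfun_II)
  then show "f \<in> {(\<lambda>w1 w2. nfun c c0 (II F E w1 w2)) | c c0. True}" by blast
qed

text \<open>The functional is the last coordinate \<open>x\<^sup>2\<^sup>n\<^sup>+\<^sup>1\<close>.\<close>

lemma III_functional:
  assumes "ImII F E = DmodT"
  shows "\<exists>c c0. (c, c0) \<noteq> 0 \<and> (\<forall>p. nfun c c0 p = 0 \<longleftrightarrow> p \<in> ImII F E)
                 \<and> (\<forall>u v w. nfun c c0 (III F E u v w) = fz E u v w)"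
proof (intro exI conjI allI)
  show "((0::complex^'n), (1::complex)) \<noteq> 0" by (simp add: zero_prod_def)
  show "nfun 0 1 p = 0 \<longleftrightarrow> p \<in> ImII F E" for p
    by (simp add: assms DmodT_eq nfun_def cdot_def)
  show "nfun 0 1 (III F E u v w) = fz E u v w" for u v w
    by (simp add: nfun_def III_def fz_def cdot_def)
qed

lemma pd_hyperplane_on_Z:
  assumes "y \<in> U"
  shows "pd j (\<lambda>y. a0 + cdot a y + cdot b (F y) + c * E y) y
    = a$j + (\<Sum>k\<in>UNIV. b$k * pd j (Fk k) y) + c * pd j E y"
proof -
  have "has_pd j (\<lambda>y. a0 + cdot a y + cdot b (F y) + c * E y) y
      (0 + (\<Sum>k\<in>UNIV. a$k * (if k = j then 1 else 0)) + (\<Sum>k\<in>UNIV. b$k * pd j (Fk k) y) + c * pd j E y)"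
    unfolding cdot_def
    by (intro has_pd_add has_pd_const has_pd_sum has_pd_cmult has_pd_coord has_pd_cholo_on[where U=U]
        legendrian_germ assms)
  then show ?thesis by (simp add: pd_eqI sum_delta_mult mult.commute[of "a $ _"])
qed

lemma second_pd_hyperplane_on_Z:
  "ipd [i, j] (\<lambda>y. a0 + cdot a y + cdot b (F y) + c * E y) 0 = - fz E b (axis i 1) (axis j 1)"
proof -
  have "ipd [i, j] (\<lambda>y. a0 + cdot a y + cdot b (F y) + c * E y) 0
      = pd i (\<lambda>y. a$j + (\<Sum>k\<in>UNIV. b$k * pd j (Fk k) y) + c * pd j E y) 0"
    using pd_cong_open[OF legendrian_germ(1,2) pd_hyperplane_on_Z] by simp
  also have "\<dots> = 0 + (\<Sum>k\<in>UNIV. b$k * pd i (pd j (Fk k)) 0) + c * pd i (pd j E) 0"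
    by (intro pd_eqI has_pd_add has_pd_const has_pd_sum has_pd_cmult has_pd_cholo_on[where U=U]
        cholo_on_pd[where U=U] legendrian_germ)
  finally show ?thesis
    by (simp add: fz_axis_axis second_pd_F_origin[simplified] second_pd_E_origin[simplified] sum_negf)
qed

text \<open>A hyperplane through \<open>Z\<close> is killed by differentiating its equation up to three times at \<open>z\<close>.\<close>

lemma linearly_nondegenerate:
  assumes inj: "inj (\<lambda>v w1 w2. fz E v w1 w2)"
    and W: "open W" "0 \<in> W" "W \<subseteq> U"
    and Z: "\<And>y. y \<in> W \<Longrightarrow> a0 + cdot a y + cdot b (F y) + c * E y = 0"
  shows "a0 = 0 \<and> a = 0 \<and> b = 0 \<and> c = 0"
proof -
  define \<Phi> where "\<Phi> = (\<lambda>y. a0 + cdot a y + cdot b (F y) + c * E y)"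
  have \<Phi>: "\<And>y. y \<in> W \<Longrightarrow> \<Phi> y = 0" using Z by (simp add: \<Phi>_def)
  have a0: "a0 = 0" using Z[OF W(2)] legendrian_germ(5,6) by (simp add: cdot_def)
  have "a $ j = 0" for j
    using ipd_eq_0_on_open[where g=\<Phi> and ds="[j]", OF W(1) \<Phi> W(2)] pd_hyperplane_on_Z[OF legendrian_germ(2)]
    by (simp add: \<Phi>_def legendrian_germ)
  then have a: "a = 0" by (simp add: vec_eq_iff)
  have "fz E b (axis i 1) (axis j 1) = 0" for i j
    using ipd_eq_0_on_open[where g=\<Phi> and ds="[i, j]", OF W(1) \<Phi> W(2)] second_pd_hyperplane_on_Z[of i j]
    by (simp add: \<Phi>_def)
  then have "(\<lambda>v w. fz E b v w) = (\<lambda>v w. fz E 0 v w)"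
    by (intro ext) (subst fz_expand_last2, simp)
  then have b: "b = 0" using inj by (meson injD)
  have c: "c = 0"
  proof (rule ccontr)
    assume "c \<noteq> 0"
    then have "E y = 0" if "y \<in> W" for y using Z[OF that] a0 a b by (simp add: cdot_def)
    then have "ipd [l, i, j] E 0 = 0" for l i j by (rule ipd_eq_0_on_open[OF W(1) _ W(2)])
    then have "(\<lambda>v w. fz E (axis k 1) v w) = (\<lambda>v w. fz E 0 v w)" for k
      by (intro ext) (simp add: fz_def)
    then have "(axis k 1 :: complex^'n) = 0" for k using inj by (meson injD)
    then show False by simp
  qed
  show ?thesis using a0 a b c by simp
qed

end

theorem proposition2p4:
  fixes F :: "complex^'n::finite \<Rightarrow> complex^'n"
    and E :: "complex^'n \<Rightarrow> complex"
    and U :: "(complex^'n) set"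
  assumes "adapted_legendrian F E U"
  shows "ImII F E \<subseteq> DmodT
    \<and> (ImII F E = DmodT \<longleftrightarrow> (\<forall>v. (\<forall>w. II F E v w = 0) \<longrightarrow> v = 0))
    \<and> (ImII F E = DmodT \<longrightarrow>
         (\<exists>c c0. (c, c0) \<noteq> 0 \<and> (\<forall>p. nfun c c0 p = 0 \<longleftrightarrow> p \<in> ImII F E)
                 \<and> (\<forall>u v w. nfun c c0 (III F E u v w) = fz E u v w))
       \<and> {(\<lambda>w1 w2. nfun c c0 (II F E w1 w2)) | c c0. True} = {(\<lambda>w1 w2. fz E v w1 w2) | v. True}
       \<and> inj (\<lambda>v w1 w2. fz E v w1 w2)
       \<and> (\<forall>a0 a b c W. open W \<and> 0 \<in> W \<and> W \<subseteq> U \<and>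
              (\<forall>y\<in>W. a0 + cdot a y + cdot b (F y) + c * E y = 0)
              \<longrightarrow> a0 = 0 \<and> a = 0 \<and> b = 0 \<and> c = 0))"
proof (intro conjI impI)
  show "ImII F E \<subseteq> DmodT" by (rule ImII_subset_DmodT[OF assms])
  show "ImII F E = DmodT \<longleftrightarrow> (\<forall>v. (\<forall>w. II F E v w = 0) \<longrightarrow> v = 0)"
    by (rule ImII_eq_DmodT_iff[OF assms])
  show "{(\<lambda>w1 w2. nfun c c0 (II F E w1 w2)) | c c0. True} = {(\<lambda>w1 w2. fz E v w1 w2) | v. True}"
    by (rule II_functionals_eq_fz_system[OF assms])
  assume nondeg: "ImII F E = DmodT"
  then show "\<exists>c c0. (c, c0) \<noteq> 0 \<and> (\<forall>p. nfun c c0 p = 0 \<longleftrightarrow> p \<in> ImII F E)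
      \<and> (\<forall>u v w. nfun c c0 (III F E u v w) = fz E u v w)"
    by (rule III_functional[OF assms])
  show inj: "inj (\<lambda>v w1 w2. fz E v w1 w2)" by (rule inj_fz[OF assms nondeg])
  show "\<forall>a0 a b c W. open W \<and> 0 \<in> W \<and> W \<subseteq> U \<and>
      (\<forall>y\<in>W. a0 + cdot a y + cdot b (F y) + c * E y = 0) \<longrightarrow> a0 = 0 \<and> a = 0 \<and> b = 0 \<and> c = 0"
    using linearly_nondegenerate[OF assms inj] by blast
qed

end
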